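(* Let $G=\mathrm{GL}_n$ over a field $k$, acting on $G/Q$ by left multiplication. (i) If $i\in\{2,\dots,n\}$ and $g\in X_i$, then $T_1\subseteq\mathrm{Stab}_T(g)$. (ii) If $j\in\{2,\dots,n\}$ and $g\in X_{1j}$, then $T_j\subseteq\mathrm{Stab}_T(g)$. (iii) $\mathrm{Stab}_T(\mathring g)=\{1\}$.
   Context: $T$ is the diagonal torus, $B$ the upper triangular Borel, $U$ its unipotent radical, $Q$ the mirabolic subgroup of matrices whose last row is $(0,\dots,0,1)$. For $1\le j\le n$, $T_j=\{\mathrm{diag}(1,\dots,1,t_j,1,\dots,1): t_j\in k^\times\}$ (entry $t_j$ in position $j$). For $1\le i\le n$, $w_i$ is the permutation matrix of the transposition $(i\,n)$ (so $w_n=1$), and $X_i=Bw_iQ/Q$; then $G/Q=\bigsqcup_i X_i$. $E_{ij}$ are the elementary matrices, $U_{\alpha_{1j}}=\{\exp(aE_{1j})=1+aE_{1j}\}$. One has $X_1=T\big(\prod_{j=2}^nU_{\alpha_{1j}}\big)w_1Q/Q$; for $2\le j\le n$, $X_{1j}\subset X_1$ is the closed subscheme of elements whose $U_{\alpha_{1j}}$-component is trivial. Finally $\mathring g=\exp\big(\sum_{j=2}^nE_{1j}\big)w_1Q\in X_1$. *)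

theory Defs
  imports "Jordan_Normal_Form.Matrix"
begin

(* Conventions: n x n matrices over a field 'k, rows/columns indexed 0..n-1.
   Paper index i (1..n) corresponds to matrix index i-1. *)

definition GLn :: "nat \<Rightarrow> 'k::field mat set" where
  "GLn n = {A \<in> carrier_mat n n. invertible_mat A}"

definition torus :: "nat \<Rightarrow> 'k::field mat set" where
  "torus n = {A \<in> GLn n. diagonal_mat A}"

definition borel :: "nat \<Rightarrow> 'k::field mat set" where
  "borel n = {A \<in> GLn n. upper_triangular A}"

definition mirabolic :: "nat \<Rightarrow> 'k::field mat set" where
  "mirabolic n = {A \<in> GLn n. \<forall>c<n. A $$ (n - 1, c) = (if c = n - 1 then 1 else 0)}"

definition torus_j :: "nat \<Rightarrow> nat \<Rightarrow> 'k::field mat set" where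
  "torus_j n j = {mat n n (\<lambda>(r,c). if r = c then (if r = j - 1 then t else 1) else 0) | t. t \<noteq> 0}"

definition swap_idx :: "nat \<Rightarrow> nat \<Rightarrow> nat \<Rightarrow> nat" where
  "swap_idx a b x = (if x = a then b else if x = b then a else x)"

definition w_perm :: "nat \<Rightarrow> nat \<Rightarrow> 'k::field mat" where
  "w_perm n i = mat n n (\<lambda>(r,c). if r = swap_idx (i - 1) (n - 1) c then 1 else 0)"

definition lcoset :: "nat \<Rightarrow> 'k::field mat \<Rightarrow> 'k mat set" where
  "lcoset n g = (\<lambda>q. g * q) ` mirabolic n"

definition GmodQ :: "nat \<Rightarrow> 'k::field mat set set" where
  "GmodQ n = lcoset n ` GLn n"

definition act :: "'k::field mat \<Rightarrow> 'k mat set \<Rightarrow> 'k mat set" where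
  "act t x = (\<lambda>y. t * y) ` x"

definition stab_T :: "nat \<Rightarrow> 'k::field mat set \<Rightarrow> 'k mat set" where
  "stab_T n x = {t \<in> torus n. act t x = x}"

definition X_cell :: "nat \<Rightarrow> nat \<Rightarrow> 'k::field mat set set" where
  "X_cell n i = {lcoset n (b * w_perm n i) | b. b \<in> borel n}"

(* prod_{j=2}^n U_{alpha_{1j}}: the element prod_j (1 + a_j E_{1j}) = 1 + sum_j a_j E_{1j};
   a c is the coefficient at paper index j = c+1 *)
definition u_first_row :: "nat \<Rightarrow> (nat \<Rightarrow> 'k::field) \<Rightarrow> 'k mat" where
  "u_first_row n a = 1\<^sub>m n + mat n n (\<lambda>(r,c). if r = 0 \<and> 1 \<le> c then a c else 0)"

definition X1j :: "nat \<Rightarrow> nat \<Rightarrow> 'k::field mat set set" where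
  "X1j n j = {lcoset n (t * u_first_row n a * w_perm n 1) | t a. t \<in> torus n \<and> a (j - 1) = 0}"

(* ring g = exp(sum_{j=2}^n E_{1j}) w_1 Q; the exponential equals 1 + sum E_{1j} (square zero) *)
definition g_ring :: "nat \<Rightarrow> 'k::field mat set" where
  "g_ring n = lcoset n (u_first_row n (\<lambda>_. 1) * w_perm n 1)"

end

theory Submission
  imports Defs
begin

(* Let g be invertible and let rho be the last row of g^-1, i.e. the row vector with
   rho g = e_n^T.  Then gQ consists of the invertible y with rho y = e_n^T, so t fixes gQ
   iff rho t = rho; for diagonal t this says t_cc = 1 at every column c where rho is
   nonzero.  Everything thus reduces to the support of rho: on X_i (i >= 2) upper
   triangularity of B forces rho_1 = 0, on X_1j the trivial U_alpha_1j-component forces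
   rho_j = 0, and for the special point one finds rho = (1, -1, ..., -1). *)

lemma sum_eq_single:
  assumes "finite S" "a \<in> S" "\<And>k. k \<in> S \<Longrightarrow> k \<noteq> a \<Longrightarrow> f k = 0"
  shows "sum f S = f a"
  using assms sum.mono_neutral_right[of S "{a}" f] by auto

lemma index_mult_mat_sum:
  assumes "A \<in> carrier_mat l m" "B \<in> carrier_mat m p" "i < l" "j < p"
  shows "(A * B) $$ (i, j) = (\<Sum>k<m. A $$ (i, k) * B $$ (k, j))"
  using assms by (auto simp: scalar_prod_def lessThan_atLeast0 intro!: sum.cong)

lemma index_mult_diagonal_mat:
  fixes A D :: "'a::semiring_0 mat"
  assumes "A \<in> carrier_mat l n" "D \<in> carrier_mat n n" "diagonal_mat D" "i < l" "j < n"
  shows "(A * D) $$ (i, j) = A $$ (i, j) * D $$ (j, j)"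
  unfolding index_mult_mat_sum[OF assms(1,2,4,5)]
  using assms by (intro sum_eq_single) (auto simp: diagonal_mat_def)

lemma index_mult_upper_triangular_first_col:
  fixes A U :: "'a::semiring_0 mat"
  assumes "A \<in> carrier_mat l n" "U \<in> carrier_mat n n" "upper_triangular U" "i < l" "0 < n"
  shows "(A * U) $$ (i, 0) = A $$ (i, 0) * U $$ (0, 0)"
  unfolding index_mult_mat_sum[OF assms(1,2,4,5)]
  using assms by (intro sum_eq_single) (auto simp: upper_triangular_def)

lemma GLn_eq_Units: "GLn n = Units (ring_mat TYPE('k::field) n ())"
proof -
  have "invertible_mat A \<longleftrightarrow> (\<exists>B\<in>carrier_mat n n. B * A = 1\<^sub>m n \<and> A * B = 1\<^sub>m n)"
    if A: "A \<in> carrier_mat n n" for A :: "'k mat"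
  proof
    assume "invertible_mat A"
    then obtain B where B: "A * B = 1\<^sub>m n" "B * A = 1\<^sub>m (dim_row B)"
      using A unfolding invertible_mat_def inverts_mat_def by auto
    have "B \<in> carrier_mat n n"
      using B A by (metis carrier_matD carrier_matI index_mult_mat(2,3) index_one_mat(2,3))
    then show "\<exists>B\<in>carrier_mat n n. B * A = 1\<^sub>m n \<and> A * B = 1\<^sub>m n" using B by auto
  next
    assume "\<exists>B\<in>carrier_mat n n. B * A = 1\<^sub>m n \<and> A * B = 1\<^sub>m n"
    then show "invertible_mat A"
      using A unfolding invertible_mat_def inverts_mat_def by auto
  qed
  then show ?thesis by (auto simp: GLn_def Units_def ring_mat_simps)
qed

lemma GLn_mult:
  assumes "A \<in> GLn n" "B \<in> GLn n"
  shows "A * B \<in> (GLn n :: 'k::field mat set)"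
proof -
  interpret ring "ring_mat TYPE('k) n ()" by (rule ring_mat)
  show ?thesis using assms Units_m_closed by (simp add: GLn_eq_Units ring_mat_simps)
qed

lemma GLn_inverse:
  fixes g :: "'k::field mat"
  assumes "g \<in> GLn n"
  obtains gi where "gi \<in> GLn n" "g * gi = 1\<^sub>m n" "gi * g = 1\<^sub>m n"
proof -
  interpret ring "ring_mat TYPE('k) n ()" by (rule ring_mat)
  show ?thesis
    using that[of "inv\<^bsub>ring_mat TYPE('k) n ()\<^esub> g"] assms Units_inv_Units Units_r_inv Units_l_inv
    by (simp add: GLn_eq_Units ring_mat_simps)
qed

lemma GLn_intro:
  assumes "A \<in> carrier_mat n n" "B \<in> carrier_mat n n" "A * B = 1\<^sub>m n" "B * A = 1\<^sub>m n"
  shows "A \<in> (GLn n :: 'k::field mat set)"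
  using assms by (auto simp: GLn_eq_Units Units_def ring_mat_simps)

lemma GLn_carrier: "A \<in> GLn n \<Longrightarrow> A \<in> carrier_mat n n"
  by (simp add: GLn_def)

lemma torus_diagonal_nonzero:
  assumes "t \<in> torus n" "c < n"
  shows "t $$ (c, c) \<noteq> (0 :: 'k::field)"
proof -
  have t: "t \<in> GLn n" "diagonal_mat t" using assms by (auto simp: torus_def)
  obtain ti where "ti \<in> GLn n" "ti * t = 1\<^sub>m n" using GLn_inverse[OF t(1)] by metis
  then have "ti $$ (c, c) * t $$ (c, c) = 1"
    using index_mult_diagonal_mat[of ti n n t c c] t assms(2) by (simp add: GLn_carrier)
  then show ?thesis by auto
qed

lemma diagonal_mat_in_torus:
  fixes D :: "'k::field mat"
  assumes D: "D \<in> carrier_mat n n" "diagonal_mat D" and nz: "\<And>c. c < n \<Longrightarrow> D $$ (c, c) \<noteq> 0"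
  shows "D \<in> torus n"
proof -
  define Di where "Di = mat n n (\<lambda>(r, c). if r = c then inverse (D $$ (r, r)) else 0)"
  have Di: "Di \<in> carrier_mat n n" "diagonal_mat Di"
    and Di_diag: "\<And>c. c < n \<Longrightarrow> Di $$ (c, c) = inverse (D $$ (c, c))"
    by (auto simp: Di_def diagonal_mat_def)
  have "D * Di = 1\<^sub>m n" "Di * D = 1\<^sub>m n"
    using D Di nz by (auto simp: index_mult_diagonal_mat Di_diag diagonal_mat_def
        simp del: index_mult_mat(1) intro!: eq_matI)
  then have "D \<in> GLn n" using D(1) Di(1) by (intro GLn_intro)
  then show ?thesis using D(2) by (simp add: torus_def)
qed

lemma torus_eq_one_mat:
  assumes "t \<in> torus n" "\<And>c. c < n \<Longrightarrow> t $$ (c, c) = (1 :: 'k::field)"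
  shows "t = 1\<^sub>m n"
  using assms by (auto simp: torus_def GLn_def diagonal_mat_def intro!: eq_matI)

definition last_unit_row :: "nat \<Rightarrow> 'a::zero_neq_one mat" where
  "last_unit_row n = mat 1 n (\<lambda>(_, c). if c = n - 1 then 1 else 0)"

lemma last_unit_row_carrier [simp]: "last_unit_row n \<in> carrier_mat 1 n"
  by (simp add: last_unit_row_def)

lemma index_last_unit_row_mult:
  fixes A :: "'a::semiring_1 mat"
  assumes "A \<in> carrier_mat n m" "c < m" "0 < n"
  shows "(last_unit_row n * A) $$ (0, c) = A $$ (n - 1, c)"
proof -
  have "(last_unit_row n * A) $$ (0, c) = (\<Sum>k<n. last_unit_row n $$ (0, k) * A $$ (k, c))"
    by (rule index_mult_mat_sum[OF last_unit_row_carrier]) (use assms in auto)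
  also have "\<dots> = A $$ (n - 1, c)"
    using assms by (subst sum_eq_single[where a = "n - 1"]) (auto simp: last_unit_row_def)
  finally show ?thesis .
qed

lemma mirabolic_iff:
  "q \<in> mirabolic n \<longleftrightarrow> q \<in> GLn n \<and> last_unit_row n * q = (last_unit_row n :: 'k::field mat)"
proof -
  have "last_unit_row n * q = last_unit_row n \<longleftrightarrow>
      (\<forall>c<n. q $$ (n - 1, c) = (if c = n - 1 then 1 else 0))" if "q \<in> carrier_mat n n"
  proof
    assume q: "last_unit_row n * q = last_unit_row n"
    show "\<forall>c<n. q $$ (n - 1, c) = (if c = n - 1 then 1 else 0)"
    proof (intro allI impI)
      fix c assume "c < n"
      then have "q $$ (n - 1, c) = (last_unit_row n * q) $$ (0, c)"
        using that by (simp add: index_last_unit_row_mult)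
      also have "\<dots> = last_unit_row n $$ (0, c)" by (simp only: q)
      finally show "q $$ (n - 1, c) = (if c = n - 1 then 1 else 0)"
        using \<open>c < n\<close> by (simp add: last_unit_row_def)
    qed
  next
    assume last_row: "\<forall>c<n. q $$ (n - 1, c) = (if c = n - 1 then 1 else 0)"
    show "last_unit_row n * q = last_unit_row n"
    proof (rule eq_matI)
      fix i j assume "i < dim_row (last_unit_row n :: 'k mat)" "j < dim_col (last_unit_row n :: 'k mat)"
      then have "i = 0" "j < n" by (simp_all add: last_unit_row_def)
      then show "(last_unit_row n * q) $$ (i, j) = last_unit_row n $$ (i, j)"
        using that last_row
        by (simp only: \<open>i = 0\<close>, subst index_last_unit_row_mult) (auto simp: last_unit_row_def)
    qed (use that in \<open>auto simp: last_unit_row_def\<close>)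
  qed
  then show ?thesis by (auto simp: mirabolic_def GLn_def)
qed

lemma lcoset_eq_last_row:
  fixes g \<rho> :: "'k::field mat"
  assumes g: "g \<in> GLn n" and \<rho>: "\<rho> \<in> carrier_mat 1 n" "\<rho> * g = last_unit_row n"
  shows "lcoset n g = {y \<in> GLn n. \<rho> * y = last_unit_row n}"
proof (intro equalityI subsetI)
  fix y assume "y \<in> lcoset n g"
  then obtain q where q: "q \<in> GLn n" "last_unit_row n * q = last_unit_row n" and y: "y = g * q"
    by (auto simp: lcoset_def mirabolic_iff)
  have "\<rho> * y = \<rho> * g * q"
    using assoc_mult_mat[OF \<rho>(1) GLn_carrier[OF g] GLn_carrier[OF q(1)]] y by simp
  then show "y \<in> {y \<in> GLn n. \<rho> * y = last_unit_row n}"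
    using q \<rho>(2) y GLn_mult[OF g q(1)] by simp
next
  fix y assume "y \<in> {y \<in> GLn n. \<rho> * y = last_unit_row n}"
  then have y: "y \<in> GLn n" "\<rho> * y = last_unit_row n" by auto
  obtain gi where gi: "gi \<in> GLn n" "g * gi = 1\<^sub>m n" using GLn_inverse[OF g] by metis
  have carriers: "g \<in> carrier_mat n n" "gi \<in> carrier_mat n n" "y \<in> carrier_mat n n"
    using g gi y by (simp_all add: GLn_carrier)
  have "last_unit_row n * (gi * y) = \<rho> * g * (gi * y)" by (simp add: \<rho>(2))
  also have "\<dots> = \<rho> * (g * gi) * y"
    using \<rho>(1) carriers by (simp add: assoc_mult_mat[of _ 1 n _ n _ n] assoc_mult_mat[of _ n n _ n _ n])
  also have "\<dots> = last_unit_row n" using gi(2) \<rho>(1) y(2) by simp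
  finally have "gi * y \<in> mirabolic n" using GLn_mult[OF gi(1) y(1)] by (simp add: mirabolic_iff)
  moreover have "y = g * (gi * y)"
    using carriers gi(2) by (simp add: assoc_mult_mat[symmetric, of _ n n _ n _ n])
  ultimately show "y \<in> lcoset n g" by (auto simp: lcoset_def)
qed

lemma act_lcoset_eq_iff:
  fixes g \<rho> t :: "'k::field mat"
  assumes g: "g \<in> GLn n" and \<rho>: "\<rho> \<in> carrier_mat 1 n" "\<rho> * g = last_unit_row n"
    and t: "t \<in> GLn n"
  shows "act t (lcoset n g) = lcoset n g \<longleftrightarrow> \<rho> * t = \<rho>"
proof
  assume stable: "act t (lcoset n g) = lcoset n g"
  obtain gi where gi: "gi \<in> GLn n" "g * gi = 1\<^sub>m n" using GLn_inverse[OF g] by metis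
  have carriers: "g \<in> carrier_mat n n" "gi \<in> carrier_mat n n" "t \<in> carrier_mat n n"
    using g gi t by (simp_all add: GLn_carrier)
  have "g \<in> lcoset n g" using g \<rho> by (simp add: lcoset_eq_last_row)
  then have "t * g \<in> lcoset n g" using stable by (auto simp: act_def)
  then have "\<rho> * t * g = \<rho> * g"
    using g \<rho> carriers by (simp add: lcoset_eq_last_row assoc_mult_mat[of _ 1 n _ n _ n])
  then have "\<rho> * t * g * gi = \<rho> * g * gi" by simp
  then show "\<rho> * t = \<rho>"
    using \<rho>(1) carriers gi(2) by (simp add: assoc_mult_mat[of _ 1 n _ n _ n])
next
  assume fixes_\<rho>: "\<rho> * t = \<rho>"
  obtain ti where ti: "ti \<in> GLn n" "t * ti = 1\<^sub>m n" using GLn_inverse[OF t] by metis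
  have carriers: "t \<in> carrier_mat n n" "ti \<in> carrier_mat n n"
    using t ti by (simp_all add: GLn_carrier)
  have "\<rho> * ti = \<rho> * t * ti" using fixes_\<rho> by simp
  also have "\<dots> = \<rho>" using \<rho>(1) carriers ti(2) by (simp add: assoc_mult_mat[of _ 1 n _ n _ n])
  finally have fixes_\<rho>_inv: "\<rho> * ti = \<rho>" .
  have moves_in: "s * y \<in> lcoset n g"
    if "y \<in> lcoset n g" "s \<in> GLn n" "\<rho> * s = \<rho>" for s y
    using that g \<rho> GLn_mult[OF that(2)]
    by (auto simp: lcoset_eq_last_row GLn_carrier assoc_mult_mat[symmetric, of _ 1 n _ n _ n])
  show "act t (lcoset n g) = lcoset n g"
  proof (intro equalityI subsetI)
    fix y assume "y \<in> act t (lcoset n g)"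
    then show "y \<in> lcoset n g" using moves_in t fixes_\<rho> by (auto simp: act_def)
  next
    fix y assume y: "y \<in> lcoset n g"
    then have "y \<in> carrier_mat n n" using g \<rho> by (simp add: lcoset_eq_last_row GLn_carrier)
    then have "y = t * (ti * y)"
      using carriers ti(2) by (simp add: assoc_mult_mat[symmetric, of _ n n _ n _ n])
    then show "y \<in> act t (lcoset n g)"
      using moves_in[OF y ti(1) fixes_\<rho>_inv] by (auto simp: act_def)
  qed
qed

lemma GLn_last_row_of_inverse:
  fixes g :: "'k::field mat"
  assumes g: "g \<in> GLn n"
  obtains \<rho> where "\<rho> \<in> carrier_mat 1 n" "\<rho> * g = last_unit_row n"
proof -
  obtain gi where gi: "gi \<in> GLn n" "gi * g = 1\<^sub>m n" using GLn_inverse[OF g] by metis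
  have "last_unit_row n * gi * g = last_unit_row n"
    using gi g
    by (simp add: assoc_mult_mat[OF last_unit_row_carrier GLn_carrier GLn_carrier]
        right_mult_one_mat[OF last_unit_row_carrier])
  then show thesis
    using that mult_carrier_mat[OF last_unit_row_carrier GLn_carrier[OF gi(1)]] by blast
qed

lemma stab_T_lcoset:
  fixes g \<rho> :: "'k::field mat"
  assumes g: "g \<in> GLn n" and \<rho>: "\<rho> \<in> carrier_mat 1 n" "\<rho> * g = last_unit_row n"
  shows "stab_T n (lcoset n g) = {t \<in> torus n. \<forall>c<n. \<rho> $$ (0, c) \<noteq> 0 \<longrightarrow> t $$ (c, c) = 1}"
proof -
  have "\<rho> * t = \<rho> \<longleftrightarrow> (\<forall>c<n. \<rho> $$ (0, c) \<noteq> 0 \<longrightarrow> t $$ (c, c) = 1)" if t: "t \<in> torus n" for t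
  proof -
    have t_diag: "t \<in> carrier_mat n n" "diagonal_mat t" using t by (auto simp: torus_def GLn_def)
    have "\<rho> * t = \<rho> \<longleftrightarrow> (\<forall>c<n. (\<rho> * t) $$ (0, c) = \<rho> $$ (0, c))"
      using \<rho>(1) t_diag(1) by (auto simp del: index_mult_mat(1) intro!: eq_matI)
    also have "\<dots> \<longleftrightarrow> (\<forall>c<n. \<rho> $$ (0, c) * t $$ (c, c) = \<rho> $$ (0, c))"
      using \<rho>(1) t_diag by (simp add: index_mult_diagonal_mat del: index_mult_mat(1))
    finally show ?thesis by auto
  qed
  then show ?thesis
    using act_lcoset_eq_iff[OF g \<rho>] by (auto simp: stab_T_def torus_def)
qed

lemma torus_j_subset_stab_T:
  fixes g \<rho> :: "'k::field mat"
  assumes g: "g \<in> GLn n" and \<rho>: "\<rho> \<in> carrier_mat 1 n" "\<rho> * g = last_unit_row n"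
    and vanishes: "\<rho> $$ (0, j - 1) = 0"
  shows "torus_j n j \<subseteq> stab_T n (lcoset n g)"
proof
  fix t :: "'k mat" assume "t \<in> torus_j n j"
  then obtain s :: 'k where s: "s \<noteq> 0"
    and t: "t = mat n n (\<lambda>(r, c). if r = c then (if r = j - 1 then s else 1) else 0)"
    by (auto simp: torus_j_def)
  have "t \<in> torus n" using s by (intro diagonal_mat_in_torus) (auto simp: t diagonal_mat_def)
  moreover have "t $$ (c, c) = 1" if "c < n" "\<rho> $$ (0, c) \<noteq> 0" for c
    using that vanishes by (auto simp: t)
  ultimately show "t \<in> stab_T n (lcoset n g)" by (simp add: stab_T_lcoset[OF g \<rho>])
qed

lemma stab_T_lcoset_eq_one_mat:
  fixes g \<rho> :: "'k::field mat"
  assumes g: "g \<in> GLn n" and \<rho>: "\<rho> \<in> carrier_mat 1 n" "\<rho> * g = last_unit_row n"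
    and nonzero: "\<And>c. c < n \<Longrightarrow> \<rho> $$ (0, c) \<noteq> 0"
  shows "stab_T n (lcoset n g) = {1\<^sub>m n}"
proof -
  have "1\<^sub>m n \<in> (torus n :: 'k mat set)"
    by (intro diagonal_mat_in_torus) (auto simp: diagonal_mat_def)
  moreover have "t = 1\<^sub>m n" if "t \<in> stab_T n (lcoset n g)" for t
    using that nonzero by (intro torus_eq_one_mat) (auto simp: stab_T_lcoset[OF g \<rho>])
  ultimately show ?thesis by (auto simp: stab_T_lcoset[OF g \<rho>])
qed

lemma swap_idx_swap_idx [simp]: "swap_idx a b (swap_idx a b x) = x"
  by (simp add: swap_idx_def)

lemma swap_idx_less: "a < n \<Longrightarrow> b < n \<Longrightarrow> x < n \<Longrightarrow> swap_idx a b x < n"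
  by (simp add: swap_idx_def)

lemma w_perm_carrier [simp]: "w_perm n i \<in> carrier_mat n n"
  by (simp add: w_perm_def)

lemma index_mult_w_perm:
  fixes A :: "'k::field mat"
  assumes A: "A \<in> carrier_mat m n" and i: "1 \<le> i" "i \<le> n" and rc: "r < m" "c < n"
  shows "(A * w_perm n i) $$ (r, swap_idx (i - 1) (n - 1) c) = A $$ (r, c)"
proof -
  have s: "swap_idx (i - 1) (n - 1) c < n" using i rc by (simp add: swap_idx_less)
  then show ?thesis
    using A rc by (subst index_mult_mat_sum[OF A w_perm_carrier], simp_all,
        subst sum_eq_single[where a = c]) (auto simp: w_perm_def)
qed

lemma w_perm_GLn:
  assumes i: "1 \<le> i" "i \<le> n"
  shows "w_perm n i \<in> (GLn n :: 'k::field mat set)"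
proof -
  let ?w = "w_perm n i :: 'k mat" and ?s = "swap_idx (i - 1) (n - 1)"
  have "?w * ?w = 1\<^sub>m n"
  proof (rule eq_matI)
    fix r d assume "r < dim_row (1\<^sub>m n :: 'k mat)" "d < dim_col (1\<^sub>m n :: 'k mat)"
    then have rd: "r < n" "d < n" by auto
    then have sd: "?s d < n" using i by (simp add: swap_idx_less)
    have "(?w * ?w) $$ (r, d) = (?w * ?w) $$ (r, ?s (?s d))" by simp
    also have "\<dots> = ?w $$ (r, ?s d)" using i rd sd by (intro index_mult_w_perm) auto
    also have "\<dots> = 1\<^sub>m n $$ (r, d)" using rd sd by (auto simp: w_perm_def)
    finally show "(?w * ?w) $$ (r, d) = 1\<^sub>m n $$ (r, d)" .
  qed (auto simp: w_perm_def)
  then show ?thesis by (intro GLn_intro) auto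
qed

lemma last_row_before_w_perm:
  fixes A :: "'k::field mat"
  assumes A: "A \<in> carrier_mat 1 n" and i: "1 \<le> i" "i \<le> n"
    and eq: "A * w_perm n i = last_unit_row n" and c: "c < n"
  shows "A $$ (0, c) = (if c = i - 1 then 1 else 0)"
proof -
  have "A $$ (0, c) = (A * w_perm n i) $$ (0, swap_idx (i - 1) (n - 1) c)"
    using index_mult_w_perm[OF A i _ c] by simp
  also have "\<dots> = (if c = i - 1 then 1 else 0)"
    using c i swap_idx_less[of "i - 1" n "n - 1" c] by (auto simp: eq last_unit_row_def swap_idx_def)
  finally show ?thesis .
qed

lemma u_first_row_carrier [simp]: "u_first_row n a \<in> carrier_mat n n"
  by (simp add: u_first_row_def)

lemma index_u_first_row:
  "r < n \<Longrightarrow> c < n \<Longrightarrow>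
    u_first_row n a $$ (r, c) = (if r = c then 1 else 0) + (if r = 0 \<and> 1 \<le> c then a c else 0)"
  by (simp add: u_first_row_def)

lemma index_mult_u_first_row:
  fixes A :: "'k::field mat"
  assumes A: "A \<in> carrier_mat m n" and rc: "r < m" "c < n"
  shows "(A * u_first_row n a) $$ (r, c) = A $$ (r, c) + (if 1 \<le> c then A $$ (r, 0) * a c else 0)"
proof -
  have "(A * u_first_row n a) $$ (r, c) = (\<Sum>k<n. A $$ (r, k) * u_first_row n a $$ (k, c))"
    using A rc by (intro index_mult_mat_sum) auto
  also have "\<dots> = (\<Sum>k<n. A $$ (r, k) * (if k = c then 1 else 0)) +
      (\<Sum>k<n. A $$ (r, k) * (if k = 0 \<and> 1 \<le> c then a c else 0))"
    using rc by (auto simp: index_u_first_row sum.distrib[symmetric] distrib_left intro!: sum.cong)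
  also have "\<dots> = A $$ (r, c) + A $$ (r, 0) * (if 1 \<le> c then a c else 0)"
    using rc by (simp add: sum_eq_single[where a = c] sum_eq_single[where a = 0])
  finally show ?thesis by simp
qed

lemma u_first_row_GLn: "u_first_row n a \<in> (GLn n :: 'k::field mat set)"
proof -
  have inverse: "u_first_row n b * u_first_row n (\<lambda>c. - b c) = (1\<^sub>m n :: 'k mat)" for b
  proof (rule eq_matI)
    fix r c assume "r < dim_row (1\<^sub>m n :: 'k mat)" "c < dim_col (1\<^sub>m n :: 'k mat)"
    then show "(u_first_row n b * u_first_row n (\<lambda>c. - b c)) $$ (r, c) = 1\<^sub>m n $$ (r, c)"
      by (auto simp: index_mult_u_first_row[OF u_first_row_carrier] index_u_first_row
          simp del: index_mult_mat(1))
  qed (simp_all add: u_first_row_def)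
  show ?thesis
    using inverse[of a] inverse[of "\<lambda>c. - a c"] by (intro GLn_intro) auto
qed

lemma GLn_upper_triangular_first_entry_nonzero:
  fixes b :: "'k::field mat"
  assumes b: "b \<in> GLn n" "upper_triangular b" and n: "0 < n"
  shows "b $$ (0, 0) \<noteq> 0"
proof -
  obtain bi where bi: "bi \<in> GLn n" "bi * b = 1\<^sub>m n" using GLn_inverse[OF b(1)] by metis
  have "bi $$ (0, 0) * b $$ (0, 0) = 1"
    using index_mult_upper_triangular_first_col[OF GLn_carrier[OF bi(1)] GLn_carrier[OF b(1)] b(2) n n]
      bi(2) n by simp
  then show ?thesis by auto
qed

lemma X_cell_torus_1_subset_stab_T:
  fixes g :: "'k::field mat set"
  assumes i: "i \<in> {2..n}" and g: "g \<in> X_cell n i"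
  shows "torus_j n 1 \<subseteq> stab_T n g"
proof -
  obtain b where b: "b \<in> GLn n" "upper_triangular b" and g_eq: "g = lcoset n (b * w_perm n i)"
    using g by (auto simp: X_cell_def borel_def)
  have bw: "b * w_perm n i \<in> GLn n" using i by (intro GLn_mult b(1) w_perm_GLn) auto
  obtain \<rho> where \<rho>: "\<rho> \<in> carrier_mat 1 n" "\<rho> * (b * w_perm n i) = last_unit_row n"
    using GLn_last_row_of_inverse[OF bw] by metis
  have "\<rho> * b * w_perm n i = last_unit_row n"
    using \<rho> b by (simp add: assoc_mult_mat[OF \<rho>(1) GLn_carrier w_perm_carrier])
  then have "(\<rho> * b) $$ (0, 0) = 0"
    using i last_row_before_w_perm[of "\<rho> * b" n i 0] \<rho>(1) b by (simp add: GLn_carrier)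
  moreover have "(\<rho> * b) $$ (0, 0) = \<rho> $$ (0, 0) * b $$ (0, 0)"
    using i by (intro index_mult_upper_triangular_first_col[OF \<rho>(1) GLn_carrier[OF b(1)] b(2)]) auto
  moreover have "b $$ (0, 0) \<noteq> 0"
    using i b by (intro GLn_upper_triangular_first_entry_nonzero[of b n]) auto
  ultimately have "\<rho> $$ (0, 1 - 1) = 0" by simp
  then show ?thesis using torus_j_subset_stab_T[OF bw \<rho>] g_eq by simp
qed

lemma X1j_torus_j_subset_stab_T:
  fixes g :: "'k::field mat set"
  assumes j: "j \<in> {2..n}" and g: "g \<in> X1j n j"
  shows "torus_j n j \<subseteq> stab_T n g"
proof -
  obtain t a where t: "t \<in> torus n" and a: "a (j - 1) = 0"
    and g_eq: "g = lcoset n (t * u_first_row n a * w_perm n 1)"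
    using g by (auto simp: X1j_def)
  have t': "t \<in> GLn n" "t \<in> carrier_mat n n" "diagonal_mat t"
    using t by (auto simp: torus_def GLn_def)
  let ?g = "t * u_first_row n a * w_perm n 1"
  have g_GLn: "?g \<in> GLn n" using j t' by (intro GLn_mult u_first_row_GLn w_perm_GLn) auto
  obtain \<rho> where \<rho>: "\<rho> \<in> carrier_mat 1 n" "\<rho> * ?g = last_unit_row n"
    using GLn_last_row_of_inverse[OF g_GLn] by metis
  let ?c = "j - 1"
  have c: "1 \<le> ?c" "?c < n" using j by auto
  have \<rho>t: "\<rho> * t \<in> carrier_mat 1 n" using mult_carrier_mat[OF \<rho>(1) t'(2)] .
  have "\<rho> * t * u_first_row n a * w_perm n 1 = last_unit_row n"
    using \<rho> t' by (simp add: assoc_mult_mat[of _ 1 n _ n _ n])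
  then have "(\<rho> * t * u_first_row n a) $$ (0, ?c) = 0"
    using c mult_carrier_mat[OF \<rho>t u_first_row_carrier]
    by (subst last_row_before_w_perm[where n = n and i = 1]) auto
  moreover have "(\<rho> * t * u_first_row n a) $$ (0, ?c) = (\<rho> * t) $$ (0, ?c)"
    using c a by (subst index_mult_u_first_row[OF \<rho>t]) auto
  moreover have "(\<rho> * t) $$ (0, ?c) = \<rho> $$ (0, ?c) * t $$ (?c, ?c)"
    using c \<rho>(1) t' by (intro index_mult_diagonal_mat) auto
  ultimately have "\<rho> $$ (0, ?c) = 0" using torus_diagonal_nonzero[OF t c(2)] by simp
  then show ?thesis using torus_j_subset_stab_T[OF g_GLn \<rho>] g_eq by simp
qed

lemma stab_T_g_ring: "stab_T n (g_ring n :: 'k::field mat set) = {1\<^sub>m n}"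
proof -
  let ?g = "u_first_row n (\<lambda>_. 1) * w_perm n 1 :: 'k mat"
  have g_GLn: "?g \<in> GLn n"
  proof (cases "n = 0")
    case True
    have "?g \<in> carrier_mat n n" using mult_carrier_mat[OF u_first_row_carrier w_perm_carrier] .
    then show ?thesis using True by (intro GLn_intro[where B = ?g]) (auto intro!: eq_matI)
  next
    case False
    then show ?thesis by (intro GLn_mult u_first_row_GLn w_perm_GLn) auto
  qed
  obtain \<rho> where \<rho>: "\<rho> \<in> carrier_mat 1 n" "\<rho> * ?g = last_unit_row n"
    using GLn_last_row_of_inverse[OF g_GLn] by metis
  have last_row: "\<rho> * u_first_row n (\<lambda>_. 1) * w_perm n 1 = last_unit_row n"
    using \<rho> by (simp add: assoc_mult_mat[OF \<rho>(1) u_first_row_carrier w_perm_carrier])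
  have entries: "\<rho> $$ (0, c) + (if 1 \<le> c then \<rho> $$ (0, 0) else 0) = (if c = 0 then 1 else 0)"
    if "c < n" for c
  proof -
    have "(\<rho> * u_first_row n (\<lambda>_. 1)) $$ (0, c) = (if c = 0 then 1 else 0)"
      using last_row_before_w_perm[OF mult_carrier_mat[OF \<rho>(1) u_first_row_carrier] _ _ last_row that]
        that by simp
    then show ?thesis
      by (simp add: index_mult_u_first_row[OF \<rho>(1)] that del: index_mult_mat(1)) (simp split: if_splits)
  qed
  have "\<rho> $$ (0, c) \<noteq> 0" if "c < n" for c
    using entries[OF that] entries[of 0] that by (cases "c = 0") auto
  then show ?thesis using stab_T_lcoset_eq_one_mat[OF g_GLn \<rho>] by (simp add: g_ring_def)
qed

theorem lemma8p2:
  fixes n :: nat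
  shows "(\<forall>i\<in>{2..n}. \<forall>g\<in>(X_cell n i :: 'k::field mat set set). torus_j n 1 \<subseteq> stab_T n g)
       \<and> (\<forall>j\<in>{2..n}. \<forall>g\<in>(X1j n j :: 'k::field mat set set). torus_j n j \<subseteq> stab_T n g)
       \<and> stab_T n (g_ring n :: 'k::field mat set) = {1\<^sub>m n}"
  using X_cell_torus_1_subset_stab_T X1j_torus_j_subset_stab_T stab_T_g_ring by blast

end
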